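(* Let $W_1,\dots,W_n$ be proper subspaces of $\mathbb R^d$ with orthogonal projections $P_1,\dots,P_n$, and let $n_i=\dim W_i$. Let $a_1,\dots,a_n\in\mathbb R$ and $0<A\in\mathbb R$. The following are equivalent: (1) For every choice of orthonormal bases $\{u_{i,j}\}_{j=1}^{n_i}$ of $W_i$ ($i=1,\dots,n$), the family $\{a_iu_{i,j}\}_{i=1,\dots,n;\,j=1,\dots,n_i}$ is an $A$-tight frame for $\mathbb R^d$. (2) For some choice of orthonormal bases $\{u_{i,j}\}_{j=1}^{n_i}$ of $W_i$, the family $\{a_iu_{i,j}\}_{i,j}$ is an $A$-tight frame for $\mathbb R^d$. (3) $\sum_{i=1}^n a_i^2P_i=A\cdot I$. (4) $\sum_{i=1}^n a_i^2(I-P_i)=\left(\sum_{i=1}^n a_i^2-A\right)\cdot I$. (5) For every choice of orthonormal bases $\{v_{i,j}\}_{j=1}^{d-n_i}$ of $W_i^\perp$, the family $\{a_iv_{i,j}\}_{i,j}$ is a $\left(\sum_{i=1}^n a_i^2-A\right)$-tight frame for $\mathbb R^d$. (6) For some choice of orthonormal bases $\{v_{i,j}\}_{j=1}^{d-n_i}$ of $W_i^\perp$, the family $\{a_iv_{i,j}\}_{i,j}$ is a $\left(\sum_{i=1}^n a_i^2-A\right)$-tight frame for $\mathbb R^d$.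
   Context: A family $\{\psi_k\}$ in $\mathbb R^d$ is a $B$-tight frame ($B>0$) if $\sum_k|\langle x,\psi_k\rangle|^2=B\|x\|^2$ for all $x\in\mathbb R^d$. A proper subspace is a subspace different from $\mathbb R^d$. *)

theory Defs
  imports "HOL-Analysis.Analysis"
begin

definition orth_proj :: "'a::euclidean_space set \<Rightarrow> 'a \<Rightarrow> 'a" where
  "orth_proj W x = (THE y. y \<in> W \<and> (\<forall>w\<in>W. (x - y) \<bullet> w = 0))"

definition is_onb :: "'a::euclidean_space set \<Rightarrow> nat \<Rightarrow> (nat \<Rightarrow> 'a) \<Rightarrow> bool" where
  "is_onb W m u \<longleftrightarrow>
     (\<forall>j<m. \<forall>k<m. u j \<bullet> u k = (if j = k then 1 else 0)) \<and> span (u ` {..<m}) = W"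

definition tight_frame :: "real \<Rightarrow> 'i set \<Rightarrow> ('i \<Rightarrow> 'a::euclidean_space) \<Rightarrow> bool" where
  "tight_frame B I psi \<longleftrightarrow> B > 0 \<and> (\<forall>x. (\<Sum>k\<in>I. (x \<bullet> psi k)\<^sup>2) = B * (norm x)\<^sup>2)"

end

theory Submission
  imports Defs
begin

text \<open>
  For orthonormal bases \<open>u i\<close> of \<open>W i\<close>, Parseval gives
  \<open>\<Sum>\<^sub>i\<^sub>,\<^sub>j (x \<bullet> a\<^sub>i u\<^sub>i\<^sub>j)\<^sup>2 = x \<bullet> S x\<close> with \<open>S = \<Sum>\<^sub>i a\<^sub>i\<^sup>2 P\<^sub>i\<close>, so the family is
  \<open>B\<close>-tight iff the self-adjoint operator \<open>S\<close> has quadratic form \<open>B \<parallel>x\<parallel>\<^sup>2\<close>, i.e.\ by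
  polarization iff \<open>S = B I\<close>; this condition does not mention the bases. The same applied to
  the complements, whose projections are \<open>I - P\<^sub>i\<close>, handles (4)--(6). The only extra point is
  that the complementary bound \<open>\<Sum> a\<^sub>i\<^sup>2 - A\<close> is positive: some \<open>a\<^sub>i \<noteq> 0\<close> because \<open>A > 0\<close>, and
  testing the complementary identity at a vector outside the proper subspace \<open>W\<^sub>i\<close> gives a
  strictly positive value.
\<close>

lemma orth_proj_unique:
  fixes W :: "'a::euclidean_space set"
  assumes "subspace W" "y \<in> W" "\<forall>w\<in>W. (x - y) \<bullet> w = 0"
  shows "orth_proj W x = y"
  unfolding orth_proj_def
proof (rule the_equality)
  show "y \<in> W \<and> (\<forall>w\<in>W. (x - y) \<bullet> w = 0)" using assms by blast
next
  fix y' assume y': "y' \<in> W \<and> (\<forall>w\<in>W. (x - y') \<bullet> w = 0)"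
  have "y - y' \<in> W" using assms y' by (simp add: subspace_diff)
  have "(y - y') \<bullet> (y - y') = (x - y') \<bullet> (y - y') - (x - y) \<bullet> (y - y')"
    by (simp add: algebra_simps)
  also have "\<dots> = 0" using \<open>y - y' \<in> W\<close> y' assms by simp
  finally show "y' = y" by simp
qed

lemma orth_proj_characterization:
  fixes W :: "'a::euclidean_space set"
  assumes "subspace W"
  shows "orth_proj W x \<in> W \<and> (\<forall>w\<in>W. (x - orth_proj W x) \<bullet> w = 0)"
proof -
  obtain y z where y: "y \<in> span W" and z: "\<And>w. w \<in> span W \<Longrightarrow> orthogonal z w"
    and x: "x = y + z"
    using orthogonal_subspace_decomp_exists [of W x] by metis
  have "y \<in> W" using y assms by (metis span_eq_iff)
  moreover have "\<forall>w\<in>W. (x - y) \<bullet> w = 0"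
    using z x by (simp add: orthogonal_def span_base)
  ultimately show ?thesis using orth_proj_unique[OF assms] by simp
qed

lemma orth_proj_add:
  fixes W :: "'a::euclidean_space set"
  assumes "subspace W"
  shows "orth_proj W (x + y) = orth_proj W x + orth_proj W y"
  using orth_proj_characterization[OF assms, of x] orth_proj_characterization[OF assms, of y]
  by (intro orth_proj_unique[OF assms])
    (auto simp: subspace_add[OF assms] algebra_simps)

lemma inner_orth_proj_commute:
  fixes W :: "'a::euclidean_space set"
  assumes "subspace W"
  shows "x \<bullet> orth_proj W y = orth_proj W x \<bullet> y"
proof -
  have through_proj: "u \<bullet> orth_proj W v = orth_proj W u \<bullet> orth_proj W v" for u v
    using orth_proj_characterization[OF assms, of u] orth_proj_characterization[OF assms, of v]
    by (simp add: inner_diff_left)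
  show ?thesis using through_proj[of x y] through_proj[of y x] by (simp add: inner_commute)
qed

lemma orth_proj_orthogonal_comp:
  fixes W :: "'a::euclidean_space set"
  assumes "subspace W"
  shows "orth_proj (orthogonal_comp W) x = x - orth_proj W x"
  using orth_proj_characterization[OF assms, of x]
  by (intro orth_proj_unique[OF subspace_orthogonal_comp])
    (auto simp: orthogonal_comp_def orthogonal_def inner_commute)

lemma dim_orthogonal_comp:
  fixes W :: "'a::euclidean_space set"
  assumes "subspace W"
  shows "dim (orthogonal_comp W) = DIM('a) - dim W"
proof -
  have "dim {y \<in> UNIV. \<forall>x \<in> W. orthogonal x y} + dim W = dim (UNIV::'a set)"
    by (rule dim_subspace_orthogonal_to_vectors) (auto simp: assms)
  moreover have "{y \<in> UNIV. \<forall>x \<in> W. orthogonal x y} = orthogonal_comp W"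
    by (auto simp: orthogonal_comp_def)
  ultimately show ?thesis by simp
qed

lemma orth_proj_is_onb:
  fixes W :: "'a::euclidean_space set"
  assumes "is_onb W m u"
  shows "orth_proj W x = (\<Sum>j<m. (x \<bullet> u j) *\<^sub>R u j)"
proof -
  have orthonormal: "\<forall>j<m. \<forall>k<m. u j \<bullet> u k = (if j = k then 1 else 0)"
    and span: "span (u ` {..<m}) = W"
    using assms unfolding is_onb_def by auto
  let ?y = "\<Sum>j<m. (x \<bullet> u j) *\<^sub>R u j"
  have "?y \<in> W" unfolding span[symmetric]
    by (intro span_sum span_mul span_base) auto
  have residual_orth_basis: "(x - ?y) \<bullet> u k = 0" if "k < m" for k
  proof -
    have "?y \<bullet> u k = (\<Sum>j<m. (x \<bullet> u j) * (u j \<bullet> u k))" by (simp add: inner_sum_left)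
    also have "\<dots> = (\<Sum>j<m. if j = k then x \<bullet> u k else 0)"
      using orthonormal that by (intro sum.cong) auto
    also have "\<dots> = x \<bullet> u k" using that by simp
    finally show ?thesis by (simp add: inner_diff_left)
  qed
  have "\<forall>w\<in>W. (x - ?y) \<bullet> w = 0"
  proof
    fix w assume "w \<in> W"
    then have "w \<in> span (u ` {..<m})" using span by simp
    then show "(x - ?y) \<bullet> w = 0"
      by (induction rule: span_induct) (auto simp: residual_orth_basis subspace_hyperplane)
  qed
  then show ?thesis
    using orth_proj_unique[OF _ \<open>?y \<in> W\<close>] span subspace_span by metis
qed

lemma sum_inner_is_onb_square:
  fixes W :: "'a::euclidean_space set"
  assumes "is_onb W m u"
  shows "(\<Sum>j<m. (x \<bullet> u j)\<^sup>2) = x \<bullet> orth_proj W x"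
  using orth_proj_is_onb[OF assms] by (simp add: inner_sum_right power2_eq_square)

lemma is_onb_exists:
  fixes W :: "'a::euclidean_space set"
  assumes "subspace W"
  shows "\<exists>u. is_onb W (dim W) u"
proof -
  obtain B where B: "pairwise orthogonal B" "\<And>x. x \<in> B \<Longrightarrow> norm x = 1"
    "independent B" "card B = dim W" "span B = W"
    using orthonormal_basis_subspace[OF assms] by metis
  have "finite B" using B(3) independent_imp_finite by blast
  then obtain u where "bij_betw u {..<dim W} B"
    using ex_bij_betw_nat_finite B(4) by (metis atLeast0LessThan)
  then have image: "u ` {..<dim W} = B" and inj: "inj_on u {..<dim W}"
    by (auto simp: bij_betw_def)
  have "u j \<bullet> u k = (if j = k then 1 else 0)" if "j < dim W" "k < dim W" for j k
  proof (cases "j = k")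
    case True
    then show ?thesis using B(2) image that by (force simp: norm_eq_1)
  next
    case False
    then have "u j \<noteq> u k" using inj that by (meson inj_on_contraD lessThan_iff)
    then show ?thesis
      using B(1) image that False by (auto simp: pairwise_def orthogonal_def)
  qed
  then show ?thesis unfolding is_onb_def using image B(5) by blast
qed

lemma is_onb_orthogonal_comp_exists:
  fixes W :: "'a::euclidean_space set"
  assumes "subspace W"
  shows "\<exists>v. is_onb (orthogonal_comp W) (DIM('a) - dim W) v"
  using is_onb_exists[OF subspace_orthogonal_comp] dim_orthogonal_comp[OF assms] by metis

lemma self_adjoint_quadratic_form_eq_scaleR:
  fixes T :: "'a::real_inner \<Rightarrow> 'a"
  assumes add: "\<And>x y. T (x + y) = T x + T y"
    and self_adjoint: "\<And>x y. x \<bullet> T y = T x \<bullet> y"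
    and quadratic_form: "\<And>x. x \<bullet> T x = B * (x \<bullet> x)"
  shows "T y = B *\<^sub>R y"
proof -
  have bilinear_form: "x \<bullet> T y = B * (x \<bullet> y)" for x
  proof -
    have "(x + y) \<bullet> T (x + y) = B * ((x + y) \<bullet> (x + y))" by (rule quadratic_form)
    then have "x \<bullet> T x + x \<bullet> T y + y \<bullet> T x + y \<bullet> T y = B * (x \<bullet> x + 2 * (x \<bullet> y) + y \<bullet> y)"
      by (simp add: add inner_commute algebra_simps)
    moreover have "y \<bullet> T x = x \<bullet> T y" using self_adjoint[of y x] by (simp add: inner_commute)
    ultimately show ?thesis using quadratic_form[of x] quadratic_form[of y] by (simp add: algebra_simps)
  qed
  have "(T y - B *\<^sub>R y) \<bullet> (T y - B *\<^sub>R y) = (T y - B *\<^sub>R y) \<bullet> T y - B * ((T y - B *\<^sub>R y) \<bullet> y)"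
    by (simp add: inner_diff_right)
  also have "\<dots> = 0" using bilinear_form[of "T y - B *\<^sub>R y"] by simp
  finally show ?thesis by simp
qed

definition weighted_proj_sum :: "nat \<Rightarrow> (nat \<Rightarrow> real) \<Rightarrow> (nat \<Rightarrow> 'a::euclidean_space set) \<Rightarrow> 'a \<Rightarrow> 'a"
  where "weighted_proj_sum n a V x = (\<Sum>i<n. (a i)\<^sup>2 *\<^sub>R orth_proj (V i) x)"

lemma weighted_proj_sum_add:
  assumes "\<And>i. i < n \<Longrightarrow> subspace (V i)"
  shows "weighted_proj_sum n a V (x + y) = weighted_proj_sum n a V x + weighted_proj_sum n a V y"
  unfolding weighted_proj_sum_def
  by (simp add: assms orth_proj_add scaleR_add_right sum.distrib)

lemma inner_weighted_proj_sum_commute: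
  assumes "\<And>i. i < n \<Longrightarrow> subspace (V i)"
  shows "x \<bullet> weighted_proj_sum n a V y = weighted_proj_sum n a V x \<bullet> y"
  unfolding weighted_proj_sum_def inner_sum_left inner_sum_right
  by (intro sum.cong refl) (simp add: assms inner_orth_proj_commute)

lemma tight_frame_is_onb_iff:
  fixes V :: "nat \<Rightarrow> 'a::euclidean_space set"
  assumes subspace: "\<And>i. i < n \<Longrightarrow> subspace (V i)"
    and onb: "\<And>i. i < n \<Longrightarrow> is_onb (V i) (m i) (u i)"
  shows "tight_frame B (SIGMA i:{..<n}. {..<m i}) (\<lambda>(i, j). a i *\<^sub>R u i j) \<longleftrightarrow>
    B > 0 \<and> (\<forall>x. weighted_proj_sum n a V x = B *\<^sub>R x)"
proof -
  let ?T = "weighted_proj_sum n a V"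
  have frame_sum: "(\<Sum>k\<in>(SIGMA i:{..<n}. {..<m i}). (x \<bullet> (\<lambda>(i, j). a i *\<^sub>R u i j) k)\<^sup>2)
      = x \<bullet> ?T x" for x
  proof -
    have "(\<Sum>k\<in>(SIGMA i:{..<n}. {..<m i}). (x \<bullet> (\<lambda>(i, j). a i *\<^sub>R u i j) k)\<^sup>2)
        = (\<Sum>i<n. \<Sum>j<m i. (x \<bullet> (a i *\<^sub>R u i j))\<^sup>2)"
      by (subst sum.Sigma) (auto simp: case_prod_beta)
    also have "\<dots> = (\<Sum>i<n. (a i)\<^sup>2 * (\<Sum>j<m i. (x \<bullet> u i j)\<^sup>2))"
      by (simp add: sum_distrib_left power_mult_distrib)
    also have "\<dots> = (\<Sum>i<n. (a i)\<^sup>2 * (x \<bullet> orth_proj (V i) x))"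
      using sum_inner_is_onb_square[OF onb] by simp
    finally show ?thesis by (simp add: weighted_proj_sum_def inner_sum_right)
  qed
  have "(\<forall>x. x \<bullet> ?T x = B * (x \<bullet> x)) \<longleftrightarrow> (\<forall>x. ?T x = B *\<^sub>R x)"
    using self_adjoint_quadratic_form_eq_scaleR[of ?T B]
      weighted_proj_sum_add[OF subspace] inner_weighted_proj_sum_commute[OF subspace]
    by auto
  then show ?thesis
    unfolding tight_frame_def frame_sum by (simp add: power2_norm_eq_inner)
qed

lemma complementary_weight_pos:
  fixes V :: "nat \<Rightarrow> 'a::euclidean_space set"
  assumes subspace: "\<And>k. k < n \<Longrightarrow> subspace (V k)"
    and "i < n" "V i \<noteq> UNIV" "a i \<noteq> 0"
    and identity: "\<And>x. (\<Sum>k<n. (a k)\<^sup>2 *\<^sub>R (x - orth_proj (V k) x)) = c *\<^sub>R x"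
  shows "c > 0"
proof -
  let ?r = "\<lambda>k x. x - orth_proj (V k) x"
  obtain x where "x \<notin> V i" using \<open>V i \<noteq> UNIV\<close> by blast
  then have "?r i x \<noteq> 0"
    using orth_proj_characterization[OF subspace[OF \<open>i < n\<close>], of x] by auto
  have inner_residual: "x \<bullet> ?r k x = ?r k x \<bullet> ?r k x" if "k < n" for k
    using orth_proj_characterization[OF subspace[OF that], of x]
    by (simp add: inner_diff_left inner_commute)
  have "(a i)\<^sup>2 * (?r i x \<bullet> ?r i x) \<le> (\<Sum>k<n. (a k)\<^sup>2 * (?r k x \<bullet> ?r k x))"
    by (rule member_le_sum) (use \<open>i < n\<close> in auto)
  also have "\<dots> = x \<bullet> (\<Sum>k<n. (a k)\<^sup>2 *\<^sub>R ?r k x)"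
    by (simp add: inner_sum_right inner_residual)
  also have "\<dots> = c * (x \<bullet> x)" by (simp add: identity)
  finally have "0 < c * (x \<bullet> x)"
    using \<open>a i \<noteq> 0\<close> \<open>?r i x \<noteq> 0\<close> by (smt (verit) inner_gt_zero_iff zero_less_power2 mult_pos_pos)
  then show ?thesis by (metis inner_ge_zero not_le zero_less_mult_iff)
qed

lemma weights_sum_gt_scalar:
  fixes V :: "nat \<Rightarrow> 'a::euclidean_space set"
  assumes subspace: "\<And>i. i < n \<Longrightarrow> subspace (V i)"
    and proper: "\<And>i. i < n \<Longrightarrow> V i \<noteq> UNIV"
    and "0 < A"
    and identity: "\<forall>x. weighted_proj_sum n a V x = A *\<^sub>R x"
  shows "A < (\<Sum>i<n. (a i)\<^sup>2)"
proof -
  have "\<exists>i<n. a i \<noteq> 0"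
  proof (rule ccontr)
    assume "\<not> (\<exists>i<n. a i \<noteq> 0)"
    then have "A *\<^sub>R x = 0" for x :: 'a
      using identity by (force simp: weighted_proj_sum_def)
    moreover obtain b :: 'a where "b \<in> Basis" using nonempty_Basis by blast
    ultimately show False using \<open>0 < A\<close> nonzero_Basis by fastforce
  qed
  then obtain i where i: "i < n" "a i \<noteq> 0" by blast
  have complementary_identity:
    "(\<Sum>k<n. (a k)\<^sup>2 *\<^sub>R (x - orth_proj (V k) x)) = ((\<Sum>k<n. (a k)\<^sup>2) - A) *\<^sub>R x" for x
    using identity[rule_format, of x]
    by (simp add: weighted_proj_sum_def scaleR_diff_right sum_subtractf scaleR_sum_left
        scaleR_diff_left)
  have "0 < (\<Sum>k<n. (a k)\<^sup>2) - A"
    by (rule complementary_weight_pos[of n V i a])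
      (simp_all add: subspace i proper complementary_identity)
  then show ?thesis by simp
qed

theorem mainTheorem1:
  fixes W :: "nat \<Rightarrow> 'a::euclidean_space set"
    and n :: nat and a :: "nat \<Rightarrow> real" and A :: real
  assumes sub: "\<And>i. i < n \<Longrightarrow> subspace (W i)"
    and proper: "\<And>i. i < n \<Longrightarrow> W i \<noteq> UNIV"
    and Apos: "0 < A"
  defines "S1 \<equiv> (\<forall>u. (\<forall>i<n. is_onb (W i) (dim (W i)) (u i)) \<longrightarrow>
          tight_frame A (SIGMA i:{..<n}. {..<dim (W i)}) (\<lambda>(i, j). a i *\<^sub>R u i j))"
    and "S2 \<equiv> (\<exists>u. (\<forall>i<n. is_onb (W i) (dim (W i)) (u i)) \<and>
          tight_frame A (SIGMA i:{..<n}. {..<dim (W i)}) (\<lambda>(i, j). a i *\<^sub>R u i j))"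
    and "S3 \<equiv> (\<forall>x. (\<Sum>i<n. (a i)\<^sup>2 *\<^sub>R orth_proj (W i) x) = A *\<^sub>R x)"
    and "S4 \<equiv> (\<forall>x. (\<Sum>i<n. (a i)\<^sup>2 *\<^sub>R (x - orth_proj (W i) x)) = ((\<Sum>i<n. (a i)\<^sup>2) - A) *\<^sub>R x)"
    and "S5 \<equiv> (\<forall>v. (\<forall>i<n. is_onb (orthogonal_comp (W i)) (DIM('a) - dim (W i)) (v i)) \<longrightarrow>
          tight_frame ((\<Sum>i<n. (a i)\<^sup>2) - A) (SIGMA i:{..<n}. {..<DIM('a) - dim (W i)})
            (\<lambda>(i, j). a i *\<^sub>R v i j))"
    and "S6 \<equiv> (\<exists>v. (\<forall>i<n. is_onb (orthogonal_comp (W i)) (DIM('a) - dim (W i)) (v i)) \<and>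
          tight_frame ((\<Sum>i<n. (a i)\<^sup>2) - A) (SIGMA i:{..<n}. {..<DIM('a) - dim (W i)})
            (\<lambda>(i, j). a i *\<^sub>R v i j))"
  shows "(S1 \<longleftrightarrow> S2) \<and> (S2 \<longleftrightarrow> S3) \<and> (S3 \<longleftrightarrow> S4) \<and> (S4 \<longleftrightarrow> S5) \<and> (S5 \<longleftrightarrow> S6)"
proof -
  let ?c = "(\<Sum>i<n. (a i)\<^sup>2) - A"
  let ?U = "\<lambda>i. orthogonal_comp (W i)"
  have S3_iff: "S3 \<longleftrightarrow> (\<forall>x. weighted_proj_sum n a W x = A *\<^sub>R x)"
    by (simp add: S3_def weighted_proj_sum_def)
  have complement_sum: "weighted_proj_sum n a ?U x
      = (\<Sum>i<n. (a i)\<^sup>2) *\<^sub>R x - weighted_proj_sum n a W x" for x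
    by (simp add: weighted_proj_sum_def orth_proj_orthogonal_comp sub scaleR_diff_right
        sum_subtractf scaleR_sum_left)
  have S4_iff: "S4 \<longleftrightarrow> (\<forall>x. weighted_proj_sum n a ?U x = ?c *\<^sub>R x)"
    by (simp add: S4_def weighted_proj_sum_def orth_proj_orthogonal_comp sub)
  have "S3 \<longleftrightarrow> S4"
    unfolding S3_iff S4_iff complement_sum by (auto simp: algebra_simps)
  have "S3 \<Longrightarrow> ?c > 0"
    using weights_sum_gt_scalar[of n W, OF sub proper Apos] S3_iff by simp
  obtain u where u: "\<forall>i<n. is_onb (W i) (dim (W i)) (u i)"
    using is_onb_exists[OF sub] by metis
  obtain v where v: "\<forall>i<n. is_onb (?U i) (DIM('a) - dim (W i)) (v i)"
    using is_onb_orthogonal_comp_exists[OF sub] by metis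
  note frame_W = tight_frame_is_onb_iff[of n W "\<lambda>i. dim (W i)", OF sub]
  note frame_U = tight_frame_is_onb_iff[of n ?U "\<lambda>i. DIM('a) - dim (W i)", OF subspace_orthogonal_comp]
  have "S1 \<longleftrightarrow> S3" "S2 \<longleftrightarrow> S3"
    unfolding S1_def S2_def S3_iff using frame_W u Apos by blast+
  moreover have "S5 \<longleftrightarrow> S4" "S6 \<longleftrightarrow> S4"
    unfolding S5_def S6_def using frame_U v S4_iff \<open>S3 \<longleftrightarrow> S4\<close> \<open>S3 \<Longrightarrow> ?c > 0\<close> by blast+
  ultimately show ?thesis using \<open>S3 \<longleftrightarrow> S4\<close> by blast
qed

end
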